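(* Let $V_\theta$ be a real vector space of finite dimension $D\ge1$ and let $M\subset V_\theta\times[0,1]$ be a dichotomous item response hypersurface with associated function $f:V_\theta\to[0,1]$. Then for every $w\in V_\theta$ there exists an affine hyperplane $H_w\subset V_\theta$ (of dimension $D-1$) with $w\in H_w$ such that the restriction of $f$ to $H_w$ is constant.
   Context: A dichotomous item response hypersurface (IRHS) is a $D=\dim V_\theta$ dimensional smooth submanifold $M$ of $V_\theta\times[0,1]$ such that for any two vectors $v,w\in V_\theta$, the intersection of $(w+\mathbb{R}\cdot v)\times[0,1]$ with $M$ is the graph of a monotonic function $w+\mathbb{R}\cdot v\to[0,1]$, where $w+\mathbb{R}\cdot v=\{w+\lambda v:\lambda\in\mathbb{R}\}$. A function $g:w+\mathbb{R}\cdot v\to[0,1]$ is monotonic if either $g(w+\lambda v)\le g(w+\mu v)$ for all $\lambda\le\mu$, or $g(w+\lambda v)\ge g(w+\mu v)$ for all $\lambda\le\mu$. Taking $v=0$ shows $M$ is the graph of a function $f:V_\theta\to[0,1]$, the associated function. *)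

theory Defs
  imports "HOL-Analysis.Analysis"
begin

fun Ck_on :: "nat \<Rightarrow> 'a::euclidean_space set \<Rightarrow> ('a \<Rightarrow> 'b::real_normed_vector) \<Rightarrow> bool" where
  "Ck_on 0 S f = continuous_on S f"
| "Ck_on (Suc k) S f =
     (f differentiable_on S \<and>
      (\<forall>i\<in>Basis. Ck_on k S (\<lambda>x. frechet_derivative f (at x) i)))"

definition smooth_on :: "'a::euclidean_space set \<Rightarrow> ('a \<Rightarrow> 'b::real_normed_vector) \<Rightarrow> bool" where
  "smooth_on S f \<longleftrightarrow> (\<forall>k. Ck_on k S f)"

text \<open>Smooth embedded submanifold of dimension d of a Euclidean space E
  (slice-chart definition): around every point of M there is a smooth
  diffeomorphism of open sets straightening M to a d-dimensional linear subspace.\<close>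
definition smooth_submanifold :: "nat \<Rightarrow> 'e::euclidean_space set \<Rightarrow> bool" where
  "smooth_submanifold d M \<longleftrightarrow>
     (\<forall>p\<in>M. \<exists>U W (\<phi>::'e \<Rightarrow> 'e) \<psi> L.
        open U \<and> p \<in> U \<and> open W \<and>
        \<phi> ` U = W \<and> \<psi> ` W = U \<and>
        (\<forall>x\<in>U. \<psi> (\<phi> x) = x) \<and> (\<forall>y\<in>W. \<phi> (\<psi> y) = y) \<and>
        smooth_on U \<phi> \<and> smooth_on W \<psi> \<and>
        subspace L \<and> dim L = d \<and>
        \<phi> ` (M \<inter> U) = W \<inter> L)"

definition monotonic_on_line :: "'a::real_vector \<Rightarrow> 'a \<Rightarrow> ('a \<Rightarrow> real) \<Rightarrow> bool" where
  "monotonic_on_line w v g \<longleftrightarrow>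
     (\<forall>s t. s \<le> t \<longrightarrow> g (w + s *\<^sub>R v) \<le> g (w + t *\<^sub>R v)) \<or>
     (\<forall>s t. s \<le> t \<longrightarrow> g (w + s *\<^sub>R v) \<ge> g (w + t *\<^sub>R v))"

definition line :: "'a::real_vector \<Rightarrow> 'a \<Rightarrow> 'a set" where
  "line w v = {w + s *\<^sub>R v | s. True}"

definition IRHS :: "('a::euclidean_space \<times> real) set \<Rightarrow> bool" where
  "IRHS M \<longleftrightarrow>
     M \<subseteq> UNIV \<times> {0..1} \<and>
     smooth_submanifold DIM('a) M \<and>
     (\<forall>v w. \<exists>g. (\<forall>x\<in>line w v. g x \<in> {0..1}) \<and> monotonic_on_line w v g \<and>
        M \<inter> (line w v \<times> {0..1}) = {(x, g x) | x. x \<in> line w v})"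

end

theory Submission
  imports Defs
begin

text \<open>The level set of \<open>f\<close> through \<open>w\<close> is the complement of
  \<open>A = {f < f w}\<close> and \<open>B = {f > f w}\<close>. Monotonicity along lines makes \<open>A\<close> and \<open>B\<close>
  convex and forbids any ray from \<open>w\<close> to meet both of them; invariance of domain,
  applied to the slice charts of the graph, makes \<open>f\<close> continuous, so \<open>A\<close> and \<open>B\<close>
  are open. Hence \<open>0\<close> lies outside the convex hull of \<open>(A - w) \<union> (w - B)\<close>, and a
  hyperplane through \<open>0\<close> supporting this hull, translated to \<open>w\<close>, separates \<open>A\<close> from
  \<open>B\<close> strictly and therefore lies in the level set.\<close>

lemma smooth_submanifold_graph_imp_continuous_on:
  fixes f :: "'a::euclidean_space \<Rightarrow> 'b::euclidean_space"
  assumes "smooth_submanifold DIM('a) {(x, f x) | x. True}"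
  shows "continuous_on UNIV f"
  unfolding continuous_on_open_vimage[OF open_UNIV] Int_UNIV_right
proof (intro allI impI)
  fix Q :: "'b set"
  assume "open Q"
  show "open (f -` Q)"
  proof (rule open_subopen[THEN iffD2], intro ballI)
    fix x0 assume x0: "x0 \<in> f -` Q"
    have "(x0, f x0) \<in> {(x, f x) | x. True}" by blast
    note chart = assms[unfolded smooth_submanifold_def, THEN bspec, OF this]
    obtain U W and \<phi> :: "'a \<times> 'b \<Rightarrow> 'a \<times> 'b" and \<psi> L where
      "open U" "(x0, f x0) \<in> U" "open W"
      and \<psi>\<phi>: "\<forall>x\<in>U. \<psi> (\<phi> x) = x" and \<phi>\<psi>: "\<forall>y\<in>W. \<phi> (\<psi> y) = y"
      and "smooth_on W \<psi>" and L: "subspace L" "dim L = DIM('a)"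
      and slice: "\<phi> ` ({(x, f x) | x. True} \<inter> U) = W \<inter> L"
      using chart by blast
    have cont_\<psi>: "continuous_on W \<psi>"
      using \<open>smooth_on W \<psi>\<close> by (metis Ck_on.simps(1) smooth_on_def)
    have \<psi>_graph: "\<psi> y = (fst (\<psi> y), f (fst (\<psi> y)))" if "y \<in> W \<inter> L" for y
    proof -
      have "y \<in> \<phi> ` ({(x, f x) | x. True} \<inter> U)"
        using that slice by simp
      then obtain x where "(x, f x) \<in> U" "y = \<phi> (x, f x)"
        by blast
      then show ?thesis using \<psi>\<phi> by simp
    qed
    define S where "S = W \<inter> \<psi> -` (snd -` Q) \<inter> L"
    have "open (W \<inter> \<psi> -` (snd -` Q))"
      using continuous_open_preimage[OF cont_\<psi> \<open>open W\<close>] \<open>open Q\<close> open_vimage_snd by blast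
    then have S_open: "openin (top_of_set L) S"
      unfolding S_def by (metis inf_commute openin_open_Int)
    have cont: "continuous_on S (fst \<circ> \<psi>)"
      by (intro continuous_on_compose continuous_on_fst continuous_on_id
          continuous_on_subset[OF cont_\<psi>]) (auto simp: S_def)
    have inj: "inj_on (fst \<circ> \<psi>) S"
    proof (rule inj_onI)
      fix y1 y2 assume "y1 \<in> S" "y2 \<in> S" "(fst \<circ> \<psi>) y1 = (fst \<circ> \<psi>) y2"
      then have "\<psi> y1 = \<psi> y2" using \<psi>_graph[of y1] \<psi>_graph[of y2] by (auto simp: S_def)
      then show "y1 = y2" using \<phi>\<psi> \<open>y1 \<in> S\<close> \<open>y2 \<in> S\<close> by (metis IntE S_def)
    qed
    have "openin (top_of_set UNIV) ((fst \<circ> \<psi>) ` S)"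
      using invariance_of_domain_subspaces[OF S_open L(1) subspace_UNIV _ cont _ inj] L(2)
      by simp
    moreover have "x0 \<in> (fst \<circ> \<psi>) ` S"
    proof
      show "\<phi> (x0, f x0) \<in> S"
        using slice \<open>(x0, f x0) \<in> U\<close> \<psi>\<phi> x0 by (auto simp: S_def)
      show "x0 = (fst \<circ> \<psi>) (\<phi> (x0, f x0))"
        using \<psi>\<phi> \<open>(x0, f x0) \<in> U\<close> by simp
    qed
    moreover have "(fst \<circ> \<psi>) ` S \<subseteq> f -` Q"
    proof
      fix x assume "x \<in> (fst \<circ> \<psi>) ` S"
      then obtain y where y: "y \<in> S" "x = fst (\<psi> y)" by auto
      then have "y \<in> W \<inter> L" "snd (\<psi> y) \<in> Q" by (auto simp: S_def)
      then have "f x \<in> Q" using \<psi>_graph[of y] y(2) by (metis snd_conv)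
      then show "x \<in> f -` Q" by simp
    qed
    ultimately show "\<exists>T. open T \<and> x0 \<in> T \<and> T \<subseteq> f -` Q"
      by auto
  qed
qed

lemma monotonic_on_line_uminus_iff [simp]:
  "monotonic_on_line w v (\<lambda>x. - f x) \<longleftrightarrow> monotonic_on_line w v f"
  unfolding monotonic_on_line_def by auto

lemma convex_strict_sublevel_if_monotonic_on_lines:
  fixes f :: "'a::real_vector \<Rightarrow> real"
  assumes "\<And>w v. monotonic_on_line w v f"
  shows "convex {x. f x < c}"
  unfolding convex_alt
proof (intro ballI allI impI)
  fix x y and u :: real
  assume "x \<in> {x. f x < c}" "y \<in> {x. f x < c}" "0 \<le> u \<and> u \<le> 1"
  have "f (x + u *\<^sub>R (y - x)) \<le> f (x + 0 *\<^sub>R (y - x)) \<or>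
        f (x + u *\<^sub>R (y - x)) \<le> f (x + 1 *\<^sub>R (y - x))"
    using assms[of x "y - x"] \<open>0 \<le> u \<and> u \<le> 1\<close> unfolding monotonic_on_line_def by blast
  moreover have "(1 - u) *\<^sub>R x + u *\<^sub>R y = x + u *\<^sub>R (y - x)"
    by (simp add: algebra_simps)
  ultimately show "(1 - u) *\<^sub>R x + u *\<^sub>R y \<in> {x. f x < c}"
    using \<open>x \<in> _\<close> \<open>y \<in> _\<close> by auto
qed

lemma convex_strict_superlevel_if_monotonic_on_lines:
  fixes f :: "'a::real_vector \<Rightarrow> real"
  assumes "\<And>w v. monotonic_on_line w v f"
  shows "convex {x. c < f x}"
  using convex_strict_sublevel_if_monotonic_on_lines[of "\<lambda>x. - f x" "- c"] assms by simp

lemma monotonic_on_line_no_ray_below_above: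
  assumes "monotonic_on_line w (y - w) f" "f x < f w" "f w < f y" "0 < t"
  shows "x - w \<noteq> t *\<^sub>R (y - w)"
proof
  assume "x - w = t *\<^sub>R (y - w)"
  then have x: "x = w + t *\<^sub>R (y - w)" by (simp add: algebra_simps)
  from assms(1) consider
      (incr) "\<And>s t. s \<le> t \<Longrightarrow> f (w + s *\<^sub>R (y - w)) \<le> f (w + t *\<^sub>R (y - w))"
    | (decr) "\<And>s t. s \<le> t \<Longrightarrow> f (w + t *\<^sub>R (y - w)) \<le> f (w + s *\<^sub>R (y - w))"
    unfolding monotonic_on_line_def by blast
  then show False
  proof cases
    case incr
    then show False using incr[of 0 t] x \<open>0 < t\<close> \<open>f x < f w\<close> by simp
  next
    case decr
    then show False using decr[of 0 1] \<open>f w < f y\<close> by simp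
  qed
qed

lemma zero_notin_convex_hull_Un:
  fixes S T :: "'a::euclidean_space set"
  assumes "convex S" "convex T" "0 \<notin> S" "0 \<notin> T"
    and "\<And>s t u v. s \<in> S \<Longrightarrow> t \<in> T \<Longrightarrow> 0 < u \<Longrightarrow> 0 < v \<Longrightarrow> u *\<^sub>R s + v *\<^sub>R t \<noteq> 0"
  shows "0 \<notin> convex hull (S \<union> T)"
proof (cases "S = {} \<or> T = {}")
  case True
  then show ?thesis using assms by (auto simp: convex_hull_eq[THEN iffD2])
next
  case False
  show ?thesis
  proof
    assume "0 \<in> convex hull (S \<union> T)"
    then obtain u v s t where "0 \<le> u" "0 \<le> v" "u + v = 1" "s \<in> S" "t \<in> T"
      and "u *\<^sub>R s + v *\<^sub>R t = 0"
      using False assms(1,2) by (auto simp: convex_hull_union_two)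
    then show False
      using assms(3-5) by (cases "u = 0"; cases "v = 0") auto
  qed
qed

lemma hyperplane_through_point_separating_open_convex:
  fixes A B :: "'a::euclidean_space set"
  assumes "open A" "open B" "convex A" "convex B" "w \<notin> A" "w \<notin> B"
    and no_ray: "\<And>x y t. x \<in> A \<Longrightarrow> y \<in> B \<Longrightarrow> 0 < t \<Longrightarrow> x - w \<noteq> t *\<^sub>R (y - w)"
  obtains a where "a \<noteq> 0" "A \<subseteq> {x. a \<bullet> w < a \<bullet> x}" "B \<subseteq> {x. a \<bullet> x < a \<bullet> w}"
proof -
  let ?S = "(\<lambda>x. x - w) ` A" and ?T = "(\<lambda>y. w - y) ` B"
  have "0 \<notin> convex hull (?S \<union> ?T)"
  proof (rule zero_notin_convex_hull_Un)
    show "convex ?S"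
      using assms(3) by simp
    have "?T = (+) w ` (\<lambda>y. - y) ` B"
      by (simp add: image_image)
    then show "convex ?T"
      using convex_translation[OF convex_negations[OF assms(4)]] by simp
    show "0 \<notin> ?S" "0 \<notin> ?T" using assms(5,6) by auto
    fix s t and u v :: real
    assume "s \<in> ?S" "t \<in> ?T" "0 < u" "0 < v"
    then obtain x y where "x \<in> A" "y \<in> B" "s = x - w" "t = w - y" by auto
    show "u *\<^sub>R s + v *\<^sub>R t \<noteq> 0"
    proof
      assume "u *\<^sub>R s + v *\<^sub>R t = 0"
      then have "u *\<^sub>R (x - w) = v *\<^sub>R (y - w)"
        using \<open>s = x - w\<close> \<open>t = w - y\<close> by (simp add: algebra_simps)
      have "x - w = (1 / u) *\<^sub>R (u *\<^sub>R (x - w))"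
        using \<open>0 < u\<close> by simp
      also have "\<dots> = (v / u) *\<^sub>R (y - w)"
        using \<open>u *\<^sub>R (x - w) = v *\<^sub>R (y - w)\<close> by simp
      finally have "x - w = (v / u) *\<^sub>R (y - w)" .
      then show False
        using no_ray \<open>x \<in> A\<close> \<open>y \<in> B\<close> \<open>0 < u\<close> \<open>0 < v\<close> by simp
    qed
  qed
  then obtain a where "a \<noteq> 0" and a: "\<forall>z \<in> convex hull (?S \<union> ?T). 0 \<le> a \<bullet> z"
    using separating_hyperplane_set_0[OF convex_convex_hull] by blast
  have a_nonneg: "0 \<le> a \<bullet> z" if "z \<in> ?S \<union> ?T" for z
    using a hull_subset[of "?S \<union> ?T" convex] that by blast
  have A_half: "A \<subseteq> {x. a \<bullet> w \<le> a \<bullet> x}"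
  proof
    fix x assume "x \<in> A"
    then have "0 \<le> a \<bullet> (x - w)" by (intro a_nonneg) auto
    then show "x \<in> {x. a \<bullet> w \<le> a \<bullet> x}" by (simp add: inner_diff_right)
  qed
  have B_half: "B \<subseteq> {x. a \<bullet> x \<le> a \<bullet> w}"
  proof
    fix y assume "y \<in> B"
    then have "0 \<le> a \<bullet> (w - y)" by (intro a_nonneg) auto
    then show "y \<in> {x. a \<bullet> x \<le> a \<bullet> w}" by (simp add: inner_diff_right)
  qed
  have "A \<subseteq> interior {x. a \<bullet> w \<le> a \<bullet> x}" "B \<subseteq> interior {x. a \<bullet> x \<le> a \<bullet> w}"
    using interior_maximal[OF A_half \<open>open A\<close>] interior_maximal[OF B_half \<open>open B\<close>] .
  then show thesis
    using that \<open>a \<noteq> 0\<close> by simp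
qed

lemma IRHS_graph_monotonic_on_line:
  assumes "IRHS M" "M = {(x, f x) | x. True}"
  shows "monotonic_on_line w v f"
proof -
  obtain g where "monotonic_on_line w v g"
    and slice: "M \<inter> (line w v \<times> {0..1}) = {(x, g x) | x. x \<in> line w v}"
    using assms(1) unfolding IRHS_def by blast
  have "g x = f x" if "x \<in> line w v" for x
  proof -
    have "(x, g x) \<in> M" using slice that by blast
    then show ?thesis using assms(2) by simp
  qed
  moreover have "w + s *\<^sub>R v \<in> line w v" for s
    unfolding line_def by blast
  ultimately show ?thesis
    using \<open>monotonic_on_line w v g\<close> unfolding monotonic_on_line_def by simp
qed

theorem lemma4:
  fixes M :: "('a::euclidean_space \<times> real) set" and f :: "'a \<Rightarrow> real"
  assumes "IRHS M"
    and "M = {(x, f x) | x. True}"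
  shows "\<forall>w. \<exists>H. affine H \<and> aff_dim H = int DIM('a) - 1 \<and> w \<in> H \<and>
                (\<forall>x\<in>H. f x = f w)"
proof
  fix w :: 'a
  have mono: "\<And>w v. monotonic_on_line w v f"
    using IRHS_graph_monotonic_on_line[OF assms] .
  have "smooth_submanifold DIM('a) {(x, f x) | x. True}"
    using assms unfolding IRHS_def by simp
  then have "continuous_on UNIV f"
    by (rule smooth_submanifold_graph_imp_continuous_on)
  then have open_sublevel: "open {x. f x < f w}" and open_superlevel: "open {x. f w < f x}"
    by (simp_all add: open_Collect_less)
  have no_ray: "x - w \<noteq> t *\<^sub>R (y - w)"
    if "x \<in> {x. f x < f w}" "y \<in> {x. f w < f x}" "0 < t" for x y t
    using monotonic_on_line_no_ray_below_above[OF mono] that by simp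
  obtain a where "a \<noteq> 0"
    and sublevel: "{x. f x < f w} \<subseteq> {x. a \<bullet> w < a \<bullet> x}"
    and superlevel: "{x. f w < f x} \<subseteq> {x. a \<bullet> x < a \<bullet> w}"
    using hyperplane_through_point_separating_open_convex[OF open_sublevel open_superlevel
        convex_strict_sublevel_if_monotonic_on_lines[OF mono]
        convex_strict_superlevel_if_monotonic_on_lines[OF mono] _ _ no_ray]
    by auto
  have "f x = f w" if "a \<bullet> x = a \<bullet> w" for x
  proof -
    have "\<not> f x < f w" "\<not> f w < f x"
      using sublevel superlevel that by auto
    then show ?thesis by simp
  qed
  moreover have "aff_dim {x. a \<bullet> x = a \<bullet> w} = int DIM('a) - 1"
    using aff_dim_hyperplane[OF \<open>a \<noteq> 0\<close>] by simp
  ultimately show "\<exists>H. affine H \<and> aff_dim H = int DIM('a) - 1 \<and> w \<in> H \<and> (\<forall>x\<in>H. f x = f w)"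
    using affine_hyperplane by blast
qed

end
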